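(* Let $A,J\in\mathbb{R}^{n\times n}$ and $0<T_{\min}\le T_{\max}$. Assume there exists a symmetric positive definite matrix $P\in\mathbb{R}^{n\times n}$ such that $$J^Te^{A^T\theta}Pe^{A\theta}J-P\prec 0\quad\text{for all }\theta\in[T_{\min},T_{\max}].$$ Then for any impulse sequence in $\mathbb{I}_{[T_{\min},T_{\max}]}$, the impulsive system (S) is globally asymptotically stable.
   Context: The impulsive system (S) is: $\dot x(t)=Ax(t)$ for $t\neq t_k$; $x^+(t)=Jx(t)$ for $t=t_k$, $k\in\{1,2,\dots\}$; $x(t_0)=x_0\in\mathbb{R}^n$. The state $x(t)$ is left-continuous and $x^+(t):=\lim_{s\downarrow t}x(s)$. The impulse times $\{t_1,t_2,\dots\}$ form a strictly increasing sequence in $(t_0,\infty)$, either finite, or infinite and unbounded, with $T_k:=t_{k+1}-t_k>\epsilon$ for some $\epsilon>0$. For a set $\mathcal{S}\subseteq(0,\infty)$, $\mathbb{I}_{\mathcal{S}}$ denotes the set of impulse sequences $\{t_1,t_2,\dots\}$ with $t_{k+1}-t_k\in\mathcal{S}$ for all $k$. For symmetric matrices, $M\prec 0$ ($M\succ0$) means negative (positive) definite. *)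

theory Defs
  imports "HOL-Analysis.Analysis"
begin

primrec mpow :: "real^'n^'n \<Rightarrow> nat \<Rightarrow> real^'n^'n" where
  "mpow M 0 = mat 1"
| "mpow M (Suc k) = M ** mpow M k"

definition mexp :: "real^'n^'n \<Rightarrow> real^'n^'n" where
  "mexp M = (\<Sum>k. (1 / fact k) *\<^sub>R mpow M k)"

definition pos_def :: "real^'n^'n \<Rightarrow> bool" where
  "pos_def P \<longleftrightarrow> transpose P = P \<and> (\<forall>x. x \<noteq> 0 \<longrightarrow> x \<bullet> (P *v x) > 0)"

definition neg_def :: "real^'n^'n \<Rightarrow> bool" where
  "neg_def M \<longleftrightarrow> transpose M = M \<and> (\<forall>x. x \<noteq> 0 \<longrightarrow> x \<bullet> (M *v x) < 0)"

definition impulse_seq :: "real \<Rightarrow> real \<Rightarrow> real \<Rightarrow> (nat \<Rightarrow> real) \<Rightarrow> bool" where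
  "impulse_seq Tmin Tmax t0 ts \<longleftrightarrow> t0 < ts 0 \<and>
     (\<forall>k. ts (Suc k) - ts k \<in> {Tmin..Tmax})"

text \<open>x is the (left-continuous) solution of the impulsive system (S) on [t0, infinity):
  it flows by x' = A x on [t0, ts 0] and on each (ts k, ts (k+1)] (derivatives one-sided
  at the endpoints, which gives left continuity at impulse times), and
  x^+(ts k) = J x(ts k).\<close>

definition impulsive_solution ::
  "real^'n^'n \<Rightarrow> real^'n^'n \<Rightarrow> real \<Rightarrow> (nat \<Rightarrow> real) \<Rightarrow> real^'n \<Rightarrow> (real \<Rightarrow> real^'n) \<Rightarrow> bool" where
  "impulsive_solution A J t0 ts x0 x \<longleftrightarrow>
     x t0 = x0 \<and>
     (\<forall>t\<in>{t0..ts 0}. (x has_vector_derivative (A *v x t)) (at t within {t0..ts 0})) \<and>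
     (\<forall>k. \<forall>t\<in>{ts k<..ts (Suc k)}.
        (x has_vector_derivative (A *v x t)) (at t within {ts k<..ts (Suc k)})) \<and>
     (\<forall>k. (x \<longlongrightarrow> J *v x (ts k)) (at_right (ts k)))"

definition GAS :: "real^'n^'n \<Rightarrow> real^'n^'n \<Rightarrow> real \<Rightarrow> (nat \<Rightarrow> real) \<Rightarrow> bool" where
  "GAS A J t0 ts \<longleftrightarrow>
     (\<forall>\<epsilon>>0. \<exists>\<delta>>0. \<forall>x0 x. impulsive_solution A J t0 ts x0 x \<and> norm x0 < \<delta> \<longrightarrow>
          (\<forall>t\<ge>t0. norm (x t) < \<epsilon>)) \<and>
     (\<forall>x0 x. impulsive_solution A J t0 ts x0 x \<longrightarrow> (x \<longlongrightarrow> 0) at_top)"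

end

theory Submission
  imports Defs
begin

(* Idea: V z = z . P z is a Lyapunov function sampled at the impulse instants.  Between
   impulses a solution is the flow e^((t - ts k) A) applied to the post-jump state, so
   x(ts (k+1)) = e^(theta A) J x(ts k) with theta in [Tmin, Tmax].  The hypothesis says that
   the Stein matrix of M(theta) = e^(theta A) J is negative definite, i.e. V strictly
   decreases along every M(theta); by compactness of [Tmin, Tmax] x unit sphere the
   decrease is uniform, V(M(theta) z) <= rho V z with rho < 1.  Hence V(x(ts k)) decays
   like rho^k, and since the flow is bounded on intervals of bounded length,
   |x t|^2 <= C rho^k |x0|^2 after the k-th impulse, which gives stability and attractivity. *)

(* Matrices carry the Frobenius (Euclidean) norm of real^'n^'m; we only need that it
   is submultiplicative and invariant under transposition. *)

lemma norm_vec_squared: "norm (v::'a::real_inner^'n)^2 = (\<Sum>i\<in>UNIV. norm (v$i)^2)"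
  by (simp add: power2_norm_eq_inner inner_vec_def)

lemma norm_matrix_vector_mult_le:
  fixes A :: "real^'n^'m"
  shows "norm (A *v x) \<le> norm A * norm x"
proof -
  have "norm (A *v x)^2 = (\<Sum>i\<in>UNIV. (A$i \<bullet> x)^2)"
    by (simp add: norm_vec_squared matrix_vector_mul_component)
  also have "\<dots> \<le> (\<Sum>i\<in>UNIV. norm (A$i)^2 * norm x^2)"
  proof (rule sum_mono)
    fix i
    have "\<bar>A$i \<bullet> x\<bar> \<le> \<bar>norm (A$i) * norm x\<bar>"
      using Cauchy_Schwarz_ineq2 by simp
    then show "(A$i \<bullet> x)^2 \<le> norm (A$i)^2 * norm x^2"
      by (metis abs_le_square_iff power_mult_distrib)
  qed
  also have "\<dots> = (norm A * norm x)^2"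
    by (simp add: norm_vec_squared[of A] power_mult_distrib sum_distrib_right)
  finally show ?thesis
    using power2_le_imp_le by fastforce
qed

lemma norm_transpose:
  fixes A :: "real^'n^'m"
  shows "norm (transpose A) = norm A"
proof -
  have "norm (transpose A)^2 = (\<Sum>i\<in>UNIV. \<Sum>j\<in>UNIV. (A$j$i)^2)"
    by (simp add: norm_vec_squared transpose_def)
  also have "\<dots> = (\<Sum>j\<in>UNIV. \<Sum>i\<in>UNIV. (A$j$i)^2)"
    by (rule sum.swap)
  also have "\<dots> = norm A^2"
    by (simp add: norm_vec_squared)
  finally show ?thesis
    by (simp add: power2_eq_iff_nonneg)
qed

lemma norm_matrix_mult_le:
  fixes A :: "real^'n^'m" and B :: "real^'p^'n"
  shows "norm (A ** B) \<le> norm A * norm B"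
proof -
  have row: "(A ** B)$i = transpose B *v (A$i)" for i
    by (simp add: matrix_matrix_mult_def matrix_vector_mult_def transpose_def vec_eq_iff mult.commute)
  have "norm (A ** B)^2 = (\<Sum>i\<in>UNIV. norm (transpose B *v (A$i))^2)"
    by (simp add: norm_vec_squared[of "A ** B"] row)
  also have "\<dots> \<le> (\<Sum>i\<in>UNIV. norm B^2 * norm (A$i)^2)"
    by (rule sum_mono) (metis norm_matrix_vector_mult_le norm_ge_zero norm_transpose
        power_mono power_mult_distrib)
  also have "\<dots> = (norm A * norm B)^2"
    by (simp add: norm_vec_squared[of A] power_mult_distrib sum_distrib_left mult.commute)
  finally show ?thesis
    using power2_le_imp_le by fastforce
qed

lemma matrix_add_rdistrib: "((A::real^'n^'m) + B) ** C = A ** C + B ** C"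
  by (simp add: matrix_matrix_mult_def vec_eq_iff algebra_simps sum.distrib)

lemma bounded_bilinear_matrix_mult:
  "bounded_bilinear (\<lambda>(A::real^'n^'m) (B::real^'p^'n). A ** B)"
proof (rule bounded_bilinear.intro)
  show "\<exists>K. \<forall>A B. norm (A ** B :: real^'p^'m) \<le> norm A * norm B * K"
    using norm_matrix_mult_le by (intro exI[of _ 1]) auto
qed (simp_all add: matrix_add_ldistrib matrix_add_rdistrib scalar_matrix_assoc matrix_scalar_ac)

lemma bounded_bilinear_matrix_vector_mult:
  "bounded_bilinear (\<lambda>(A::real^'n^'m) (x::real^'n). A *v x)"
proof (rule bounded_bilinear.intro)
  show "\<exists>K. \<forall>A x. norm (A *v x :: real^'m) \<le> norm A * norm x * K"
    using norm_matrix_vector_mult_le by (intro exI[of _ 1]) auto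
qed (simp_all add: matrix_vector_right_distrib matrix_vector_mult_add_rdistrib
      matrix_vector_mult_scaleR scaleR_matrix_vector_assoc[symmetric])

lemma continuous_on_matrix_vector_mult [continuous_intros]:
  "continuous_on X f \<Longrightarrow> continuous_on X g \<Longrightarrow>
    continuous_on X (\<lambda>x. (f x :: real^'n^'m) *v (g x :: real^'n))"
  by (rule bounded_bilinear.continuous_on[OF bounded_bilinear_matrix_vector_mult])

lemma continuous_on_matrix_mult [continuous_intros]:
  "continuous_on X f \<Longrightarrow> continuous_on X g \<Longrightarrow>
    continuous_on X (\<lambda>x. (f x :: real^'n^'m) ** (g x :: real^'p^'n))"
  by (rule bounded_bilinear.continuous_on[OF bounded_bilinear_matrix_mult])

lemma bounded_linear_transpose: "bounded_linear (transpose :: real^'n^'m \<Rightarrow> real^'m^'n)"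
proof (rule bounded_linear_intro[of _ 1])
  show "norm (transpose A) \<le> norm A * 1" for A :: "real^'n^'m"
    by (simp add: norm_transpose)
qed (simp_all add: transpose_def vec_eq_iff)

lemma has_vector_derivative_series:
  fixes f f' :: "nat \<Rightarrow> real \<Rightarrow> 'a::banach"
  assumes "convex S"
    and "\<And>n x. x \<in> S \<Longrightarrow> (f n has_vector_derivative f' n x) (at x within S)"
    and "uniform_limit S (\<lambda>n x. \<Sum>i<n. f' i x) g' sequentially"
    and "x0 \<in> S" and "summable (\<lambda>n. f n x0)"
  shows "\<exists>g. \<forall>x\<in>S. (\<lambda>n. f n x) sums g x \<and> (g has_vector_derivative g' x) (at x within S)"
  unfolding has_vector_derivative_def
proof (rule has_derivative_series[where f = f and S = S and x = x0
      and f' = "\<lambda>n x h. h *\<^sub>R f' n x" and g' = "\<lambda>x h. h *\<^sub>R g' x",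
      OF assms(1) _ _ assms(4) summable_sums[OF assms(5)]])
  show "(f n has_derivative (\<lambda>h. h *\<^sub>R f' n x)) (at x within S)" if "x \<in> S" for n x
    using assms(2)[OF that] by (simp add: has_vector_derivative_def)
  show "\<forall>\<^sub>F n in sequentially. \<forall>x\<in>S. \<forall>h.
      norm ((\<Sum>i<n. h *\<^sub>R f' i x) - h *\<^sub>R g' x) \<le> e * norm h" if "e > 0" for e
    using uniform_limitD[OF assms(3) that]
  proof (rule eventually_mono)
    fix n assume n: "\<forall>x\<in>S. dist (\<Sum>i<n. f' i x) (g' x) < e"
    show "\<forall>x\<in>S. \<forall>h. norm ((\<Sum>i<n. h *\<^sub>R f' i x) - h *\<^sub>R g' x) \<le> e * norm h"
    proof (intro ballI allI)
      fix x h assume "x \<in> S"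
      have "norm ((\<Sum>i<n. h *\<^sub>R f' i x) - h *\<^sub>R g' x) = \<bar>h\<bar> * norm ((\<Sum>i<n. f' i x) - g' x)"
        by (simp add: scaleR_sum_right[symmetric] scaleR_diff_right[symmetric])
      also have "\<dots> \<le> \<bar>h\<bar> * e"
        using n \<open>x \<in> S\<close> by (intro mult_left_mono) (auto simp: dist_norm less_imp_le)
      finally show "norm ((\<Sum>i<n. h *\<^sub>R f' i x) - h *\<^sub>R g' x) \<le> e * norm h"
        by (simp add: mult.commute)
    qed
  qed
qed

definition mexp_term :: "real^'n^'n \<Rightarrow> nat \<Rightarrow> real \<Rightarrow> real^'n^'n" where
  "mexp_term M k s = (s^k / fact k) *\<^sub>R mpow M k"

lemma mpow_commute: "M ** mpow M k = mpow M k ** M"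
  by (induction k) (simp_all add: matrix_mul_assoc)

lemma mpow_scaleR: "mpow (t *\<^sub>R M) k = t^k *\<^sub>R mpow M k"
  by (induction k) (simp_all add: scalar_matrix_assoc[symmetric] matrix_scalar_ac)

lemma mpow_transpose: "transpose (mpow M k) = mpow (transpose M) k"
  by (induction k) (simp_all add: matrix_transpose_mul mpow_commute)

lemma norm_mpow_le:
  fixes M :: "real^'n^'n"
  shows "norm (mpow M k) \<le> norm (mat 1 :: real^'n^'n) * norm M ^ k"
proof (induction k)
  case (Suc k)
  have "norm (mpow M (Suc k)) \<le> norm M * norm (mpow M k)"
    using norm_matrix_mult_le by simp
  also have "\<dots> \<le> norm M * (norm (mat 1 :: real^'n^'n) * norm M ^ k)"
    using Suc by (simp add: mult_left_mono)
  finally show ?case by (simp add: algebra_simps)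
qed simp

lemma norm_mexp_term_le:
  fixes M :: "real^'n^'n"
  assumes "\<bar>s\<bar> \<le> R"
  shows "norm (mexp_term M k s) \<le> norm (mat 1 :: real^'n^'n) * (inverse (fact k) * (R * norm M) ^ k)"
proof -
  have "norm (mexp_term M k s) = \<bar>s\<bar>^k / fact k * norm (mpow M k)"
    by (simp add: mexp_term_def power_abs)
  also have "\<dots> \<le> R^k / fact k * (norm (mat 1 :: real^'n^'n) * norm M ^ k)"
    using assms norm_mpow_le[of M k] by (intro mult_mono divide_right_mono power_mono) auto
  finally show ?thesis
    by (simp add: field_simps power_mult_distrib)
qed

lemma summable_majorant_mexp:
  "summable (\<lambda>k. norm (mat 1 :: real^'n^'n) * (inverse (fact k) * (R * norm (M :: real^'n^'n)) ^ k))"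
  by (intro summable_mult summable_exp)

lemma mexp_sums: "(\<lambda>k. mexp_term M k s) sums mexp (s *\<^sub>R M)"
proof -
  have "summable (\<lambda>k. mexp_term M k s)"
    by (rule summable_comparison_test'[OF summable_majorant_mexp[of "\<bar>s\<bar>"] norm_mexp_term_le])
      simp
  then show ?thesis
    by (simp add: sums_iff mexp_def mexp_term_def mpow_scaleR)
qed

lemma mexp_zero: "mexp (0::real^'n^'n) = mat 1"
proof -
  have "mexp_term (0::real^'n^'n) k 0 = (if k = 0 then mat 1 else 0)" for k
    by (cases k) (simp_all add: mexp_term_def)
  then have "(\<lambda>k. mexp_term (0::real^'n^'n) k 0) sums mat 1"
    using sums_single[of 0 "\<lambda>_. mat 1 :: real^'n^'n"] by simp
  from sums_unique2[OF mexp_sums[of 0 0] this] show ?thesis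
    by simp
qed

lemma transpose_mexp: "transpose (mexp M) = mexp (transpose M)"
proof -
  have "(\<lambda>k. transpose (mexp_term M k 1)) sums transpose (mexp M)"
    using bounded_linear.sums[OF bounded_linear_transpose mexp_sums[of M 1]] by simp
  moreover have "(\<lambda>k. transpose (mexp_term M k 1)) = (\<lambda>k. mexp_term (transpose M) k 1)"
    by (simp add: fun_eq_iff mexp_term_def transpose_scalar mpow_transpose)
  ultimately have "(\<lambda>k. mexp_term (transpose M) k 1) sums transpose (mexp M)"
    by simp
  from sums_unique2[OF this mexp_sums] show ?thesis
    by simp
qed

lemma has_vector_derivative_mexp_term:
  "(mexp_term M (Suc k) has_vector_derivative (M ** mexp_term M k s)) (at s within S)"
proof -
  have d: "((\<lambda>s. s^Suc k * inverse (fact (Suc k))) has_real_derivative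
      (real (Suc k) * s^k * inverse (fact (Suc k)))) (at s within S)"
    by (rule derivative_eq_intros refl)+ simp
  have eq: "real (Suc k) * s^k * inverse (fact (Suc k)) = s^k / fact k"
    by (simp add: fact_Suc field_simps del: of_nat_Suc)
  from d[unfolded eq] have "((\<lambda>s. s^Suc k / fact (Suc k)) has_real_derivative (s^k / fact k)) (at s within S)"
    by (simp only: divide_inverse)
  from has_vector_derivative_scaleR[OF this has_vector_derivative_const[of "mpow M (Suc k)"]]
  show ?thesis
    unfolding mexp_term_def[abs_def]
    by (simp add: scalar_matrix_assoc[symmetric] matrix_scalar_ac has_real_derivative_iff_has_vector_derivative)
qed

lemma uniform_limit_mexp_series:
  "uniform_limit {-R<..<R} (\<lambda>n s. \<Sum>i<n. mexp_term M i s) (\<lambda>s. mexp (s *\<^sub>R M)) sequentially"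
proof -
  have "uniform_limit {-R<..<R} (\<lambda>n s. \<Sum>i<n. mexp_term M i s) (\<lambda>s. \<Sum>i. mexp_term M i s) sequentially"
    by (rule Weierstrass_m_test[OF norm_mexp_term_le[where R = R] summable_majorant_mexp]) auto
  then show ?thesis
    by (simp add: sums_unique[OF mexp_sums, symmetric])
qed

lemma has_vector_derivative_mexp:
  fixes M :: "real^'n^'n"
  shows "((\<lambda>s. mexp (s *\<^sub>R M)) has_vector_derivative (M ** mexp (t *\<^sub>R M))) (at t within X)"
proof -
  define S where "S = {-(\<bar>t\<bar> + 1)<..<\<bar>t\<bar> + 1}"
  have S: "t \<in> S" "open S" "convex S"
    unfolding S_def by auto
  have lin: "bounded_linear (\<lambda>B. M ** B)"
    by (rule bounded_bilinear.bounded_linear_right[OF bounded_bilinear_matrix_mult])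
  from bounded_linear.uniform_limit[OF lin uniform_limit_mexp_series[where R = "\<bar>t\<bar> + 1"]]
  have "uniform_limit S (\<lambda>n s. \<Sum>i<n. M ** mexp_term M i s) (\<lambda>s. M ** mexp (s *\<^sub>R M)) sequentially"
    unfolding S_def by (simp add: linear_sum[OF bounded_linear.linear[OF lin]] o_def)
  moreover have "summable (\<lambda>n. mexp_term M (Suc n) t)"
    using mexp_sums[of M t] summable_Suc_iff[of "\<lambda>k. mexp_term M k t"] by (simp add: sums_iff)
  ultimately have "\<exists>g. \<forall>s\<in>S. (\<lambda>n. mexp_term M (Suc n) s) sums g s \<and>
      (g has_vector_derivative M ** mexp (s *\<^sub>R M)) (at s within S)"
    by (intro has_vector_derivative_series[where f = "\<lambda>n. mexp_term M (Suc n)"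
        and f' = "\<lambda>n s. M ** mexp_term M n s"])
      (simp_all add: S has_vector_derivative_mexp_term)
  then obtain g where g: "\<And>s. s \<in> S \<Longrightarrow> (\<lambda>n. mexp_term M (Suc n) s) sums g s"
    "\<And>s. s \<in> S \<Longrightarrow> (g has_vector_derivative M ** mexp (s *\<^sub>R M)) (at s within S)"
    by blast
  have g_eq: "mexp (s *\<^sub>R M) = g s + mat 1" if "s \<in> S" for s
  proof -
    have "mexp_term M 0 s = mat 1"
      by (simp add: mexp_term_def)
    then have "(\<lambda>n. mexp_term M n s) sums (g s + mat 1)"
      using g(1)[OF that] sums_Suc_iff[of "\<lambda>n. mexp_term M n s"] by simp
    then show ?thesis
      using sums_unique2[OF mexp_sums] by blast
  qed
  have "((\<lambda>s. g s + mat 1) has_vector_derivative M ** mexp (t *\<^sub>R M)) (at t)"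
    using g(2)[OF S(1)] at_within_open[OF S(1,2)] by (simp add: has_vector_derivative_add_const)
  then have "((\<lambda>s. mexp (s *\<^sub>R M)) has_vector_derivative M ** mexp (t *\<^sub>R M)) (at t)"
    by (rule has_vector_derivative_transform_within_open[OF _ S(2,1)]) (simp add: g_eq)
  then show ?thesis
    by (rule has_vector_derivative_at_within)
qed

lemma continuous_on_mexp [continuous_intros]:
  "continuous_on X f \<Longrightarrow> continuous_on X (\<lambda>x. mexp (f x *\<^sub>R (M::real^'n^'n)))"
proof (rule continuous_on_compose2[of UNIV "\<lambda>s. mexp (s *\<^sub>R M)"])
  show "continuous_on UNIV (\<lambda>s. mexp (s *\<^sub>R M))"
    by (intro continuous_at_imp_continuous_on ballI has_vector_derivative_continuous[OF has_vector_derivative_mexp])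
qed auto

definition qform :: "real^'n^'n \<Rightarrow> real^'n \<Rightarrow> real" where
  "qform P z = z \<bullet> (P *v z)"

lemma qform_scaleR: "qform P (c *\<^sub>R z) = c^2 * qform P z"
  by (simp add: qform_def matrix_vector_mult_scaleR power2_eq_square)

lemma qform_le: "qform P z \<le> norm P * norm z ^ 2"
proof -
  have "qform P z \<le> norm z * norm (P *v z)"
    unfolding qform_def by (rule norm_cauchy_schwarz)
  also have "\<dots> \<le> norm z * (norm P * norm z)"
    by (intro mult_left_mono norm_matrix_vector_mult_le) auto
  finally show ?thesis
    by (simp add: power2_eq_square algebra_simps)
qed

lemma continuous_on_qform [continuous_intros]:
  "continuous_on X f \<Longrightarrow> continuous_on X (\<lambda>x. qform P (f x))"
  unfolding qform_def by (intro continuous_intros)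

(* A flow starting from a zero right limit: a solution of d' = A d on (a,b] tending to 0
   at a vanishes, since the weighted energy exp(-2|A|(s-a)) |d s|^2 is nonincreasing. *)

lemma nonpos_of_nonpos_derivative:
  fixes \<phi> D :: "real \<Rightarrow> real"
  assumes der: "\<And>s. s \<in> {a<..b} \<Longrightarrow> (\<phi> has_real_derivative D s) (at s within {a<..b})"
    and D: "\<And>s. s \<in> {a<..b} \<Longrightarrow> D s \<le> 0"
    and lim: "(\<phi> \<longlongrightarrow> 0) (at_right a)"
    and t: "t \<in> {a<..b}"
  shows "\<phi> t \<le> 0"
proof -
  have mono: "\<phi> t \<le> \<phi> s" if s: "a < s" "s < t" for s
  proof -
    have "\<exists>u\<in>{s<..<t}. \<phi> t - \<phi> s = (\<lambda>h. h * D u) (t - s)"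
    proof (rule mvt_simple[OF s(2)])
      fix u assume "s \<le> u" "u \<le> t"
      then have u: "u \<in> {a<..b}" using s t by auto
      have "(\<phi> has_real_derivative D u) (at u within {s..t})"
        by (rule has_field_derivative_subset[OF der[OF u]]) (use s t in auto)
      then show "(\<phi> has_derivative (\<lambda>h. h * D u)) (at u within {s..t})"
        by (simp add: has_field_derivative_def mult.commute[of _ "D u"])
    qed
    then obtain u where u: "u \<in> {s<..<t}" "\<phi> t - \<phi> s = (t - s) * D u" by auto
    moreover have "(t - s) * D u \<le> 0"
      using D[of u] u(1) s t by (simp add: mult_nonneg_nonpos)
    ultimately show ?thesis by simp
  qed
  show ?thesis
  proof (rule tendsto_lowerbound[OF lim])
    show "\<forall>\<^sub>F s in at_right a. \<phi> t \<le> \<phi> s"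
      using eventually_at_right_real[of a t] t by (auto elim!: eventually_mono intro: mono)
  qed simp
qed

lemma linear_ode_zero_from_right_limit:
  fixes A :: "real^'n^'n" and d :: "real \<Rightarrow> real^'n"
  assumes der: "\<And>s. s \<in> {a<..b} \<Longrightarrow> (d has_vector_derivative A *v d s) (at s within {a<..b})"
    and lim: "(d \<longlongrightarrow> 0) (at_right a)"
    and t: "t \<in> {a<..b}"
  shows "d t = 0"
proof -
  define L where "L = norm A"
  define w where "w = (\<lambda>s. exp (- 2 * L * (s - a)))"
  define \<phi> where "\<phi> = (\<lambda>s. w s * (d s \<bullet> d s))"
  define D where "D = (\<lambda>s. w s * (d s \<bullet> (A *v d s) + (A *v d s) \<bullet> d s) + (- 2 * L * w s) * (d s \<bullet> d s))"
  have "(\<phi> has_real_derivative D s) (at s within {a<..b})" if s: "s \<in> {a<..b}" for s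
  proof -
    have energy: "((\<lambda>s. d s \<bullet> d s) has_real_derivative (d s \<bullet> (A *v d s) + (A *v d s) \<bullet> d s))
        (at s within {a<..b})"
      unfolding has_real_derivative_iff_has_vector_derivative
      by (rule bounded_bilinear.has_vector_derivative[OF bounded_bilinear_inner der[OF s] der[OF s]])
    have weight: "(w has_real_derivative (- 2 * L * w s)) (at s within {a<..b})"
      unfolding w_def by (rule derivative_eq_intros refl)+ simp
    show ?thesis
      unfolding \<phi>_def D_def by (rule DERIV_mult'[OF weight energy])
  qed
  moreover have "D s \<le> 0" if "s \<in> {a<..b}" for s
  proof -
    have "d s \<bullet> (A *v d s) \<le> L * (d s \<bullet> d s)"
      using qform_le[of A "d s"] by (simp add: qform_def L_def power2_norm_eq_inner)
    then show ?thesis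
      unfolding D_def w_def by (simp add: inner_commute algebra_simps)
  qed
  moreover have "(\<phi> \<longlongrightarrow> 0) (at_right a)"
  proof -
    have "(w \<longlongrightarrow> w a) (at_right a)"
      unfolding w_def by (intro tendsto_intros)
    from tendsto_mult[OF this tendsto_inner[OF lim lim]] show ?thesis
      unfolding \<phi>_def by simp
  qed
  ultimately have "\<phi> t \<le> 0"
    using t by (rule nonpos_of_nonpos_derivative)
  then have "d t \<bullet> d t \<le> 0"
    unfolding \<phi>_def w_def by (simp add: mult_le_0_iff)
  then show ?thesis
    by (metis inner_ge_zero inner_eq_zero_iff order_antisym)
qed

lemma has_vector_derivative_mexp_flow:
  fixes A :: "real^'n^'n"
  shows "((\<lambda>s. mexp ((s - a) *\<^sub>R A) *v y) has_vector_derivative A *v (mexp ((s - a) *\<^sub>R A) *v y))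
    (at s within X)"
proof -
  have "((\<lambda>s. s - a) has_vector_derivative 1) (at s within X)"
    by (auto intro!: derivative_eq_intros)
  from vector_diff_chain_within[OF this has_vector_derivative_mexp]
  have "((\<lambda>s. mexp ((s - a) *\<^sub>R A)) has_vector_derivative A ** mexp ((s - a) *\<^sub>R A))
      (at s within X)"
    by (simp add: o_def)
  from bounded_linear.has_vector_derivative
      [OF bounded_bilinear.bounded_linear_left[OF bounded_bilinear_matrix_vector_mult] this]
  show ?thesis
    by (simp add: matrix_vector_mul_assoc)
qed

lemma linear_ode_unique_from_right_limit:
  fixes A :: "real^'n^'n" and x :: "real \<Rightarrow> real^'n"
  assumes der: "\<And>s. s \<in> {a<..b} \<Longrightarrow> (x has_vector_derivative A *v x s) (at s within {a<..b})"
    and lim: "(x \<longlongrightarrow> y) (at_right a)"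
    and t: "t \<in> {a<..b}"
  shows "x t = mexp ((t - a) *\<^sub>R A) *v y"
proof -
  define z where "z = (\<lambda>s. mexp ((s - a) *\<^sub>R A) *v y)"
  have z_der: "(z has_vector_derivative A *v z s) (at s within X)" for s X
    unfolding z_def by (rule has_vector_derivative_mexp_flow)
  have "isCont z a" "z a = y"
    using has_vector_derivative_continuous[OF z_der] by (simp_all add: z_def mexp_zero)
  then have "(z \<longlongrightarrow> y) (at_right a)"
    by (metis isCont_def filterlim_at_split)
  then have "((\<lambda>s. x s - z s) \<longlongrightarrow> 0) (at_right a)"
    using tendsto_diff[OF lim] by fastforce
  moreover have "((\<lambda>s. x s - z s) has_vector_derivative A *v (x s - z s)) (at s within {a<..b})"
    if "s \<in> {a<..b}" for s
    using has_vector_derivative_diff[OF der[OF that] z_der]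
    by (simp add: matrix_vector_mult_diff_distrib)
  ultimately have "x t - z t = 0"
    using linear_ode_zero_from_right_limit[where d = "\<lambda>s. x s - z s"] t by blast
  then show ?thesis by (simp add: z_def)
qed

lemma impulse_seq_gap:
  "impulse_seq Tmin Tmax t0 ts \<Longrightarrow> ts (Suc k) - ts k \<in> {Tmin..Tmax}"
  by (simp add: impulse_seq_def)

lemma impulse_seq_less_Suc:
  "impulse_seq Tmin Tmax t0 ts \<Longrightarrow> 0 < Tmin \<Longrightarrow> ts k < ts (Suc k)"
  using impulse_seq_gap[of Tmin Tmax t0 ts k] by auto

lemma impulse_seq_strict_mono:
  "impulse_seq Tmin Tmax t0 ts \<Longrightarrow> 0 < Tmin \<Longrightarrow> strict_mono ts"
  by (rule strict_monoI_Suc) (rule impulse_seq_less_Suc)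

lemma impulse_seq_lower_bound:
  assumes "impulse_seq Tmin Tmax t0 ts"
  shows "ts 0 + real k * Tmin \<le> ts k"
proof (induction k)
  case (Suc k)
  then show ?case
    using impulse_seq_gap[OF assms, of k] by (simp add: algebra_simps)
qed simp

lemma impulse_interval_exists:
  assumes seq: "impulse_seq Tmin Tmax t0 ts" and Tmin: "0 < Tmin" and t: "ts 0 < t"
  shows "\<exists>k. ts k < t \<and> t \<le> ts (Suc k)"
proof -
  obtain n :: nat where "(t - ts 0) / Tmin < real n"
    using reals_Archimedean2 by blast
  then have "t \<le> ts n"
    using impulse_seq_lower_bound[OF seq, of n] Tmin by (simp add: field_simps)
  then have ex: "\<exists>n. t \<le> ts n" by blast
  define m where "m = (LEAST n. t \<le> ts n)"
  have m: "t \<le> ts m"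
    unfolding m_def by (rule LeastI_ex[OF ex])
  then obtain k where k: "m = Suc k"
    using t by (cases m) auto
  have "\<not> t \<le> ts k"
    using not_less_Least[of k "\<lambda>n. t \<le> ts n"] k unfolding m_def by simp
  then show ?thesis
    using m k by (metis not_le)
qed

lemma bound_after_impulse:
  fixes f :: "real \<Rightarrow> real" and c \<rho> :: real
  assumes seq: "impulse_seq Tmin Tmax t0 ts" and Tmin: "0 < Tmin"
    and \<rho>: "0 \<le> \<rho>" "\<rho> \<le> 1" and c: "0 \<le> c"
    and bound: "\<And>k t. t \<in> {ts k<..ts (Suc k)} \<Longrightarrow> f t \<le> c * \<rho>^k"
    and t: "ts k < t"
  shows "f t \<le> c * \<rho>^k"
proof -
  have mono: "strict_mono ts"
    using seq Tmin by (rule impulse_seq_strict_mono)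
  then have "ts 0 \<le> ts k"
    by (simp add: strict_mono_less_eq)
  then obtain j where j: "ts j < t" "t \<le> ts (Suc j)"
    using impulse_interval_exists[OF seq Tmin] t by force
  have "k \<le> j"
  proof (rule ccontr)
    assume "\<not> k \<le> j"
    then have "ts (Suc j) \<le> ts k"
      using mono by (simp add: strict_mono_less_eq)
    then show False using j t by simp
  qed
  have "f t \<le> c * \<rho>^j"
    using bound j by simp
  also have "\<dots> \<le> c * \<rho>^k"
    using \<rho> c \<open>k \<le> j\<close> by (intro mult_left_mono power_decreasing) auto
  finally show ?thesis .
qed

lemma impulsive_solution_initial_flow:
  fixes A J :: "real^'n^'n"
  assumes sol: "impulsive_solution A J t0 ts x0 x" and lt: "t0 < ts 0" and t: "t \<in> {t0..ts 0}"
  shows "x t = mexp ((t - t0) *\<^sub>R A) *v x0"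
proof (cases "t = t0")
  case True
  then show ?thesis
    using sol by (simp add: impulsive_solution_def mexp_zero)
next
  case False
  have der: "\<And>s. s \<in> {t0..ts 0} \<Longrightarrow> (x has_vector_derivative A *v x s) (at s within {t0..ts 0})"
    using sol by (simp add: impulsive_solution_def)
  have "continuous (at t0 within {t0..ts 0}) x"
    using has_vector_derivative_continuous[OF der[of t0]] lt by simp
  then have "(x \<longlongrightarrow> x0) (at_right t0)"
    using sol by (simp add: continuous_within at_within_Icc_at_right[OF lt] impulsive_solution_def)
  moreover have "(x has_vector_derivative A *v x s) (at s within {t0<..ts 0})" if "s \<in> {t0<..ts 0}" for s
    using that by (intro has_vector_derivative_within_subset[OF der]) auto
  ultimately show ?thesis
    using t False by (intro linear_ode_unique_from_right_limit[where a = t0 and b = "ts 0"]) auto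
qed

lemma impulsive_solution_flow_after_impulse:
  fixes A J :: "real^'n^'n"
  assumes sol: "impulsive_solution A J t0 ts x0 x" and t: "t \<in> {ts k<..ts (Suc k)}"
  shows "x t = mexp ((t - ts k) *\<^sub>R A) *v (J *v x (ts k))"
  using sol t by (intro linear_ode_unique_from_right_limit) (auto simp: impulsive_solution_def)

lemma pos_def_qform_pos: "pos_def P \<Longrightarrow> z \<noteq> 0 \<Longrightarrow> 0 < qform P z"
  by (simp add: pos_def_def qform_def)

lemma pos_def_qform_nonneg: "pos_def P \<Longrightarrow> 0 \<le> qform P z"
  using pos_def_qform_pos[of P z] by (cases "z = 0") (auto simp: qform_def)

(* A positive definite form dominates a multiple of |z|^2: take the minimum of the form
   on the unit sphere and rescale. *)
lemma pos_def_coercive: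
  fixes P :: "real^'n^'n"
  assumes P: "pos_def P"
  shows "\<exists>\<mu>>0. \<forall>z. \<mu> * norm z ^ 2 \<le> qform P z"
proof -
  have "sphere (0::real^'n) 1 \<noteq> {}"
    by simp
  moreover have "continuous_on (sphere 0 1) (qform P)"
    using continuous_on_qform[OF continuous_on_id] by simp
  ultimately obtain u where u: "u \<in> sphere (0::real^'n) 1"
    and min: "\<And>z. z \<in> sphere 0 1 \<Longrightarrow> qform P u \<le> qform P z"
    using continuous_attains_inf[OF compact_sphere] by blast
  have "qform P u * norm z ^ 2 \<le> qform P z" for z
  proof (cases "z = 0")
    case False
    then have nz: "norm z > 0" by simp
    have "qform P u \<le> qform P (inverse (norm z) *\<^sub>R z)"
      using nz by (intro min) simp
    then have "qform P u * norm z ^ 2 \<le> inverse (norm z) ^ 2 * qform P z * norm z ^ 2"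
      by (simp add: qform_scaleR mult_right_mono)
    also have "\<dots> = qform P z"
      using nz by (simp add: field_simps)
    finally show ?thesis .
  qed (simp add: qform_def)
  moreover have "qform P u > 0"
    using u by (intro pos_def_qform_pos[OF P]) auto
  ultimately show ?thesis by blast
qed

(* Moving a matrix across the inner product, needed to rewrite z^T M^T P M z. *)
lemma inner_vector_matrix: "(x::real^'n) \<bullet> (y v* M) = (M *v x) \<bullet> (y::real^'m)"
  by (metis dot_lmul_matrix inner_commute)

lemma qform_Stein_matrix:
  "z \<bullet> ((transpose M ** P ** M - P) *v z) = qform P (M *v z) - qform P z"
  by (simp add: qform_def matrix_vector_mult_diff_rdistrib inner_diff_right
      matrix_vector_mul_assoc[symmetric] inner_vector_matrix)

lemma neg_def_Stein_decrease:
  assumes "neg_def (transpose M ** P ** M - P)" and "z \<noteq> 0"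
  shows "qform P (M *v z) < qform P z"
proof -
  have "z \<bullet> ((transpose M ** P ** M - P) *v z) < 0"
    using assms unfolding neg_def_def by blast
  then show ?thesis
    by (simp add: qform_Stein_matrix)
qed

(* The matrix of the hypothesis is the Stein matrix of the flow-then-jump map e^(\<theta>A) J. *)
lemma flow_jump_Stein_matrix:
  "transpose J ** mexp (\<theta> *\<^sub>R transpose A) ** P ** mexp (\<theta> *\<^sub>R A) ** J =
    transpose (mexp (\<theta> *\<^sub>R A) ** J) ** P ** (mexp (\<theta> *\<^sub>R A) ** J)"
  by (simp add: matrix_transpose_mul transpose_mexp transpose_scalar matrix_mul_assoc)

(* Both sides are quadratic in z, so a bound on the unit sphere holds everywhere. *)
lemma qform_bound_from_sphere:
  assumes sphere: "\<And>z. norm z = 1 \<Longrightarrow> qform P (M *v z) \<le> \<rho> * qform P z"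
  shows "qform P (M *v z) \<le> \<rho> * qform P z"
proof (cases "z = 0")
  case False
  define c where "c = inverse (norm z)"
  have "qform P (M *v (c *\<^sub>R z)) \<le> \<rho> * qform P (c *\<^sub>R z)"
    using False by (intro sphere) (simp add: c_def)
  then have "c^2 * qform P (M *v z) \<le> c^2 * (\<rho> * qform P z)"
    by (simp add: matrix_vector_mult_scaleR qform_scaleR mult.left_commute)
  moreover have "0 < c^2"
    using False by (simp add: c_def)
  ultimately show ?thesis
    by simp
qed (simp add: qform_def)

(* Strict decrease of V along a compact, continuous family of linear maps is uniform:
   the ratio V(M \<theta> z) / V z attains its maximum \<rho> < 1 on \<Theta> \<times> unit sphere. *)
lemma uniform_contraction:
  fixes M :: "'a::topological_space \<Rightarrow> real^'n^'n" and P :: "real^'n^'n"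
  assumes \<Theta>: "compact \<Theta>" "\<Theta> \<noteq> {}" and cont: "continuous_on \<Theta> M" and P: "pos_def P"
    and decrease: "\<And>\<theta> z. \<theta> \<in> \<Theta> \<Longrightarrow> z \<noteq> 0 \<Longrightarrow> qform P (M \<theta> *v z) < qform P z"
  shows "\<exists>\<rho>. 0 \<le> \<rho> \<and> \<rho> < 1 \<and> (\<forall>\<theta>\<in>\<Theta>. \<forall>z. qform P (M \<theta> *v z) \<le> \<rho> * qform P z)"
proof -
  define K where "K = \<Theta> \<times> sphere (0::real^'n) 1"
  define ratio where "ratio = (\<lambda>(\<theta>, z). qform P (M \<theta> *v z) / qform P z)"
  have K: "compact K" "K \<noteq> {}"
    unfolding K_def using \<Theta> by (auto intro: compact_Times compact_sphere)
  have "qform P (snd p) \<noteq> 0" if "p \<in> K" for p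
  proof -
    have "snd p \<noteq> 0"
      using that by (auto simp: K_def)
    then show ?thesis
      using pos_def_qform_pos[OF P] by (metis less_irrefl)
  qed
  then have "continuous_on K ratio"
    unfolding ratio_def case_prod_beta
    by (intro continuous_intros continuous_on_compose2[OF cont]) (auto simp: K_def)
  then obtain p0 where p0: "p0 \<in> K" and max: "\<And>p. p \<in> K \<Longrightarrow> ratio p \<le> ratio p0"
    using continuous_attains_sup[OF K] by blast
  obtain \<theta>0 z0 where p0_pair: "p0 = (\<theta>0, z0)"
    by (cases p0)
  then have "\<theta>0 \<in> \<Theta>" "norm z0 = 1"
    using p0 by (auto simp: K_def)
  then have p0_eq: "p0 = (\<theta>0, z0)" "\<theta>0 \<in> \<Theta>" "z0 \<noteq> 0"
    using p0_pair by auto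
  have "ratio p0 < 1"
    using decrease[OF p0_eq(2,3)] pos_def_qform_pos[OF P p0_eq(3)] by (simp add: ratio_def p0_eq)
  moreover have "0 \<le> ratio p0"
    using pos_def_qform_nonneg[OF P] by (simp add: ratio_def case_prod_beta)
  moreover have "qform P (M \<theta> *v z) \<le> ratio p0 * qform P z" if \<theta>: "\<theta> \<in> \<Theta>" for \<theta> z
  proof (rule qform_bound_from_sphere)
    fix z :: "real^'n" assume z: "norm z = 1"
    then have "ratio (\<theta>, z) \<le> ratio p0"
      using \<theta> by (intro max) (simp add: K_def)
    moreover have "ratio (\<theta>, z) = qform P (M \<theta> *v z) / qform P z"
      by (simp add: ratio_def)
    moreover have "0 < qform P z"
      using z by (intro pos_def_qform_pos[OF P]) auto
    ultimately show "qform P (M \<theta> *v z) \<le> ratio p0 * qform P z"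
      by (simp add: pos_divide_le_eq)
  qed
  ultimately show ?thesis by blast
qed

lemma mexp_flow_bounded:
  fixes A :: "real^'n^'n"
  shows "\<exists>B\<ge>0. \<forall>s\<in>{0..S}. \<forall>w. norm (mexp (s *\<^sub>R A) *v w) \<le> B * norm w"
proof -
  have "compact ((\<lambda>s. mexp (s *\<^sub>R A)) ` {0..S})"
    by (intro compact_continuous_image continuous_intros compact_Icc)
  then have "bounded ((\<lambda>s. mexp (s *\<^sub>R A)) ` {0..S})"
    by (rule compact_imp_bounded)
  then obtain B where B: "\<And>s. s \<in> {0..S} \<Longrightarrow> norm (mexp (s *\<^sub>R A)) \<le> B"
    unfolding bounded_iff by blast
  have "norm (mexp (s *\<^sub>R A) *v w) \<le> max B 0 * norm w" if "s \<in> {0..S}" for s w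
  proof -
    have "norm (mexp (s *\<^sub>R A) *v w) \<le> norm (mexp (s *\<^sub>R A)) * norm w"
      by (rule norm_matrix_vector_mult_le)
    also have "\<dots> \<le> max B 0 * norm w"
      using B[OF that] by (intro mult_right_mono) auto
    finally show ?thesis .
  qed
  then show ?thesis
    by (intro exI[of _ "max B 0"]) auto
qed

lemma impulse_states_contract:
  fixes A J P :: "real^'n^'n"
  assumes sol: "impulsive_solution A J t0 ts x0 x"
    and seq: "impulse_seq Tmin Tmax t0 ts" and Tmin: "0 < Tmin" and \<rho>: "0 \<le> \<rho>"
    and contr: "\<And>\<theta> z. \<theta> \<in> {Tmin..Tmax} \<Longrightarrow> qform P ((mexp (\<theta> *\<^sub>R A) ** J) *v z) \<le> \<rho> * qform P z"
  shows "qform P (x (ts k)) \<le> \<rho>^k * qform P (x (ts 0))"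
proof (induction k)
  case (Suc k)
  have "x (ts (Suc k)) = (mexp ((ts (Suc k) - ts k) *\<^sub>R A) ** J) *v x (ts k)"
    using impulsive_solution_flow_after_impulse[OF sol] impulse_seq_less_Suc[OF seq Tmin, of k]
    by (simp add: matrix_vector_mul_assoc)
  then have "qform P (x (ts (Suc k))) \<le> \<rho> * qform P (x (ts k))"
    using contr impulse_seq_gap[OF seq] by simp
  also have "\<dots> \<le> \<rho> * (\<rho>^k * qform P (x (ts 0)))"
    using Suc \<rho> by (intro mult_left_mono)
  finally show ?case by simp
qed simp

(* Consequently |x(ts k)|^2 decays like \<rho>^k, with the constant |P| / \<mu> of the
   equivalence \<mu> |z|^2 \<le> V z \<le> |P| |z|^2. *)
lemma impulse_states_norm_decay:
  fixes A J P :: "real^'n^'n"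
  assumes sol: "impulsive_solution A J t0 ts x0 x"
    and seq: "impulse_seq Tmin Tmax t0 ts" and Tmin: "0 < Tmin" and \<rho>: "0 \<le> \<rho>"
    and contr: "\<And>\<theta> z. \<theta> \<in> {Tmin..Tmax} \<Longrightarrow> qform P ((mexp (\<theta> *\<^sub>R A) ** J) *v z) \<le> \<rho> * qform P z"
    and \<mu>: "0 < \<mu>" and coercive: "\<And>z. \<mu> * norm z^2 \<le> qform P z"
  shows "norm (x (ts k))^2 \<le> \<rho>^k * (norm P / \<mu>) * norm (x (ts 0))^2"
proof -
  have "\<mu> * norm (x (ts k))^2 \<le> qform P (x (ts k))"
    by (rule coercive)
  also have "\<dots> \<le> \<rho>^k * qform P (x (ts 0))"
    by (rule impulse_states_contract[OF sol seq Tmin \<rho> contr])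
  also have "\<dots> \<le> \<rho>^k * (norm P * norm (x (ts 0))^2)"
    using qform_le \<rho> by (intro mult_left_mono) auto
  finally show ?thesis
    using \<mu> by (simp add: field_simps)
qed

lemma impulsive_solution_initial_bound:
  fixes A J :: "real^'n^'n"
  assumes sol: "impulsive_solution A J t0 ts x0 x" and lt: "t0 < ts 0"
    and flow: "\<And>s w. s \<in> {0..ts 0 - t0} \<Longrightarrow> norm (mexp (s *\<^sub>R A) *v w) \<le> B * norm w"
    and t: "t \<in> {t0..ts 0}"
    and B: "0 \<le> B"
  shows "norm (x t)^2 \<le> B^2 * norm x0^2"
proof -
  have "norm (x t) \<le> B * norm x0"
    using impulsive_solution_initial_flow[OF sol lt t] flow[of "t - t0"] t by auto
  then have "norm (x t)^2 \<le> (B * norm x0)^2"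
    by (intro power_mono) auto
  then show ?thesis
    by (simp add: power_mult_distrib)
qed

lemma impulsive_solution_inter_impulse_bound:
  fixes A J :: "real^'n^'n"
  assumes sol: "impulsive_solution A J t0 ts x0 x" and seq: "impulse_seq Tmin Tmax t0 ts"
    and B: "0 \<le> B"
    and flow: "\<And>s w. s \<in> {0..Tmax} \<Longrightarrow> norm (mexp (s *\<^sub>R A) *v w) \<le> B * norm w"
    and t: "t \<in> {ts k<..ts (Suc k)}"
  shows "norm (x t)^2 \<le> (B * norm J)^2 * norm (x (ts k))^2"
proof -
  have "norm (x t) \<le> B * norm (J *v x (ts k))"
    using impulsive_solution_flow_after_impulse[OF sol t] flow[of "t - ts k"] t
      impulse_seq_gap[OF seq, of k] by auto
  also have "\<dots> \<le> B * (norm J * norm (x (ts k)))"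
    using B by (intro mult_left_mono norm_matrix_vector_mult_le)
  finally have "norm (x t)^2 \<le> (B * (norm J * norm (x (ts k))))^2"
    by (intro power_mono) auto
  then show ?thesis
    by (simp add: power_mult_distrib)
qed

lemma impulsive_solution_decay:
  fixes A J P :: "real^'n^'n"
  assumes Tmin: "0 < Tmin" and seq: "impulse_seq Tmin Tmax t0 ts" and P: "pos_def P"
    and \<rho>: "0 \<le> \<rho>" "\<rho> < 1"
    and contr: "\<And>\<theta> z. \<theta> \<in> {Tmin..Tmax} \<Longrightarrow> qform P ((mexp (\<theta> *\<^sub>R A) ** J) *v z) \<le> \<rho> * qform P z"
  shows "\<exists>C\<ge>0. \<forall>x0 x. impulsive_solution A J t0 ts x0 x \<longrightarrow>
    (\<forall>t\<in>{t0..ts 0}. norm (x t)^2 \<le> C * norm x0^2) \<and>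
    (\<forall>k t. ts k < t \<longrightarrow> norm (x t)^2 \<le> C * \<rho>^k * norm x0^2)"
proof -
  have lt: "t0 < ts 0"
    using seq by (simp add: impulse_seq_def)
  obtain \<mu> where \<mu>: "\<mu> > 0" and coercive: "\<And>z. \<mu> * norm z^2 \<le> qform P z"
    using pos_def_coercive[OF P] by blast
  obtain B where B: "B \<ge> 0"
    and flow: "\<And>s w. s \<in> {0..max Tmax (ts 0 - t0)} \<Longrightarrow> norm (mexp (s *\<^sub>R A) *v w) \<le> B * norm w"
    using mexp_flow_bounded by blast
  define C1 where "C1 = (B * norm J)^2 * (norm P / \<mu>) * B^2"
  have C1: "0 \<le> C1"
    using \<mu> by (simp add: C1_def)
  have "(\<forall>t\<in>{t0..ts 0}. norm (x t)^2 \<le> (C1 + B^2) * norm x0^2) \<and>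
    (\<forall>k t. ts k < t \<longrightarrow> norm (x t)^2 \<le> (C1 + B^2) * \<rho>^k * norm x0^2)"
    if sol: "impulsive_solution A J t0 ts x0 x" for x0 x
  proof -
    have initial: "norm (x t)^2 \<le> B^2 * norm x0^2" if "t \<in> {t0..ts 0}" for t
      by (rule impulsive_solution_initial_bound[OF sol lt _ that B]) (use flow in auto)
    have interval: "norm (x t)^2 \<le> ((C1 + B^2) * norm x0^2) * \<rho>^k"
      if t: "t \<in> {ts k<..ts (Suc k)}" for k t
    proof -
      have "norm (x t)^2 \<le> (B * norm J)^2 * norm (x (ts k))^2"
        by (rule impulsive_solution_inter_impulse_bound[OF sol seq B _ t]) (use flow in auto)
      also have "\<dots> \<le> (B * norm J)^2 * (\<rho>^k * (norm P / \<mu>) * norm (x (ts 0))^2)"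
        using impulse_states_norm_decay[OF sol seq Tmin \<rho>(1) contr \<mu> coercive]
        by (intro mult_left_mono) auto
      also have "\<dots> \<le> (B * norm J)^2 * (\<rho>^k * (norm P / \<mu>) * (B^2 * norm x0^2))"
        using initial[of "ts 0"] lt \<rho> \<mu> by (intro mult_left_mono) auto
      also have "\<dots> = C1 * (norm x0^2 * \<rho>^k)"
        by (simp add: C1_def mult_ac)
      also have "\<dots> \<le> (C1 + B^2) * (norm x0^2 * \<rho>^k)"
        using \<rho> by (intro mult_right_mono) auto
      finally show ?thesis
        by (simp add: mult_ac)
    qed
    have "norm (x t)^2 \<le> ((C1 + B^2) * norm x0^2) * \<rho>^k" if "ts k < t" for k t
      by (rule bound_after_impulse[OF seq Tmin \<rho>(1) _ _ interval that]) (use \<rho> C1 in auto)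
    moreover have "norm (x t)^2 \<le> (C1 + B^2) * norm x0^2" if "t \<in> {t0..ts 0}" for t
    proof -
      have "B^2 * norm x0^2 \<le> (C1 + B^2) * norm x0^2"
        using C1 by (intro mult_right_mono) auto
      then show ?thesis
        using initial[OF that] by linarith
    qed
    ultimately show ?thesis
      by (auto simp: mult_ac)
  qed
  then show ?thesis
    using C1 by (intro exI[of _ "C1 + B^2"]) auto
qed

lemma GAS_of_decay:
  fixes A J :: "real^'n^'n"
  assumes C: "0 \<le> C" and \<rho>: "0 \<le> \<rho>" "\<rho> < 1"
    and decay: "\<And>x0 x. impulsive_solution A J t0 ts x0 x \<Longrightarrow>
      (\<forall>t\<in>{t0..ts 0}. norm (x t)^2 \<le> C * norm x0^2) \<and>
      (\<forall>k t. ts k < t \<longrightarrow> norm (x t)^2 \<le> C * \<rho>^k * norm x0^2)"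
  shows "GAS A J t0 ts"
proof -
  have bounded: "norm (x t)^2 \<le> C * norm x0^2"
    if sol: "impulsive_solution A J t0 ts x0 x" and t: "t0 \<le> t" for x0 x t
    using decay[OF sol] t by (cases "t \<le> ts 0") (auto dest: spec[of _ 0])
  have stable: "\<exists>\<delta>>0. \<forall>x0 x. impulsive_solution A J t0 ts x0 x \<and> norm x0 < \<delta> \<longrightarrow>
      (\<forall>t\<ge>t0. norm (x t) < \<epsilon>)" if \<epsilon>: "\<epsilon> > 0" for \<epsilon>
  proof (intro exI[of _ "\<epsilon> / sqrt (C + 1)"] conjI allI impI)
    show "\<epsilon> / sqrt (C + 1) > 0"
      using \<epsilon> C by simp
    fix x0 x t assume H: "impulsive_solution A J t0 ts x0 x \<and> norm x0 < \<epsilon> / sqrt (C + 1)"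
      and t: "t0 \<le> t"
    have "norm (x t)^2 \<le> C * norm x0^2"
      using bounded[OF _ t] H by blast
    also have "\<dots> \<le> (C + 1) * norm x0^2"
      by (simp add: distrib_right)
    also have "\<dots> < (C + 1) * (\<epsilon> / sqrt (C + 1))^2"
      using H C by (intro mult_strict_left_mono power_strict_mono) auto
    also have "\<dots> = \<epsilon>^2"
      using C by (simp add: power_divide)
    finally show "norm (x t) < \<epsilon>"
      using \<epsilon> by (simp add: power_less_imp_less_base)
  qed
  have attractive: "(x \<longlongrightarrow> 0) at_top" if sol: "impulsive_solution A J t0 ts x0 x" for x0 x
  proof (rule tendstoI)
    fix \<epsilon> :: real assume \<epsilon>: "\<epsilon> > 0"
    have "(\<lambda>k. C * \<rho>^k * norm x0^2) \<longlonglongrightarrow> C * 0 * norm x0^2"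
      using \<rho> by (intro tendsto_intros LIMSEQ_power_zero) auto
    then have "\<forall>\<^sub>F k in sequentially. C * \<rho>^k * norm x0^2 < \<epsilon>^2"
      using \<epsilon> by (intro order_tendstoD(2)) auto
    then obtain k where k: "C * \<rho>^k * norm x0^2 < \<epsilon>^2"
      unfolding eventually_sequentially by blast
    have small: "norm (x t) < \<epsilon>" if "ts k < t" for t
    proof -
      have "norm (x t)^2 \<le> C * \<rho>^k * norm x0^2"
        using decay[OF sol] that by blast
      then have "norm (x t)^2 < \<epsilon>^2"
        using k by linarith
      then show ?thesis
        using \<epsilon> by (simp add: power_less_imp_less_base)
    qed
    show "\<forall>\<^sub>F t in at_top. dist (x t) 0 < \<epsilon>"
      using eventually_gt_at_top[of "ts k"] by (rule eventually_mono) (simp add: small)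
  qed
  show ?thesis
    unfolding GAS_def using stable attractive by blast
qed

theorem lemma1:
  fixes A J P :: "real^'n^'n" and Tmin Tmax t0 :: real and ts :: "nat \<Rightarrow> real"
  assumes "0 < Tmin" and "Tmin \<le> Tmax"
    and "pos_def P"
    and "\<forall>\<theta>\<in>{Tmin..Tmax}.
           neg_def (transpose J ** mexp (\<theta> *\<^sub>R transpose A) ** P ** mexp (\<theta> *\<^sub>R A) ** J - P)"
    and "impulse_seq Tmin Tmax t0 ts"
  shows "GAS A J t0 ts"
proof -
  have decrease: "qform P ((mexp (\<theta> *\<^sub>R A) ** J) *v z) < qform P z"
    if "\<theta> \<in> {Tmin..Tmax}" "z \<noteq> 0" for \<theta> z
    using assms(4) that by (intro neg_def_Stein_decrease) (simp add: flow_jump_Stein_matrix)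
  have cont: "continuous_on {Tmin..Tmax} (\<lambda>\<theta>. mexp (\<theta> *\<^sub>R A) ** J)"
    by (intro continuous_intros)
  obtain \<rho> where \<rho>: "0 \<le> \<rho>" "\<rho> < 1"
    and contr: "\<And>\<theta> z. \<theta> \<in> {Tmin..Tmax} \<Longrightarrow> qform P ((mexp (\<theta> *\<^sub>R A) ** J) *v z) \<le> \<rho> * qform P z"
    using uniform_contraction[where M = "\<lambda>\<theta>. mexp (\<theta> *\<^sub>R A) ** J",
        OF compact_Icc _ cont assms(3) decrease] assms(2) by auto
  obtain C where "C \<ge> 0" and "\<forall>x0 x. impulsive_solution A J t0 ts x0 x \<longrightarrow>
      (\<forall>t\<in>{t0..ts 0}. norm (x t)^2 \<le> C * norm x0^2) \<and>
      (\<forall>k t. ts k < t \<longrightarrow> norm (x t)^2 \<le> C * \<rho>^k * norm x0^2)"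
    using impulsive_solution_decay[OF assms(1,5,3) \<rho> contr] by blast
  then show ?thesis
    using GAS_of_decay[OF _ \<rho>] by blast
qed

end
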